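(* Let $\mathbf{s}=\{1/n : n\in\mathbb{N}\}\cup\{0\}\subset\mathbb{R}$. Then the free locally convex space $L(\mathbf{s})$ is topologically isomorphic (as a locally convex space) to the Graev free locally convex space $L_G(\mathbf{s})$; more precisely, with $\mathbf{s}^\ast=\mathbf{s}\setminus\{1\}$, one has $L_G(\mathbf{s})\cong L_G(\{1\})\oplus L_G(\mathbf{s}^\ast)\cong\mathbb{R}\oplus L_G(\mathbf{s})\cong L(\mathbf{s})$.
   Context: All vector spaces are real. For a Tychonoff space $X$, the free locally convex space $L(X)$ is a locally convex space with a continuous map $i:X\to L(X)$ such that every continuous map $f$ from $X$ into a locally convex space $E$ extends uniquely to a continuous linear $\bar f:L(X)\to E$ with $f=\bar f\circ i$. For a Tychonoff space $X$ with distinguished point $e$, the Graev free locally convex space $L_G(X)$ is a locally convex space with a continuous map $i:X\to L_G(X)$, $i(e)=0$, such that every continuous map $f$ from $X$ into a locally convex space $E$ with $f(e)=0$ extends uniquely to a continuous linear $\bar f:L_G(X)\to E$ with $f=\bar f\circ i$; it is independent of the choice of $e$ up to isomorphism, and algebraically it is the free vector space on $X\setminus\{e\}$. It is known that $L(X)\cong\mathbb{R}\oplus L_G(X)$ for every Tychonoff $X$, and that $L_G$ of a topological disjoint union of two spaces is the direct sum of the $L_G$'s. *)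

theory Defs
  imports "HOL-Analysis.Analysis"
begin

text \<open>The underlying vector space is the
  space of finitely supported real functions on a set A of generators; the topology
  is the finest locally convex topology making the canonical map \<iota> continuous,
  i.e. the one generated by all seminorms p for which \<iota> is continuous into (V,p).\<close>

definition fsupp_space :: "'a set \<Rightarrow> ('a \<Rightarrow> real) set" where
  "fsupp_space A = {f. finite {x. f x \<noteq> 0} \<and> {x. f x \<noteq> 0} \<subseteq> A}"

definition fdiff :: "('a \<Rightarrow> real) \<Rightarrow> ('a \<Rightarrow> real) \<Rightarrow> ('a \<Rightarrow> real)" where
  "fdiff f g = (\<lambda>x. f x - g x)"

definition fadd :: "('a \<Rightarrow> real) \<Rightarrow> ('a \<Rightarrow> real) \<Rightarrow> ('a \<Rightarrow> real)" where
  "fadd f g = (\<lambda>x. f x + g x)"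

definition fscale :: "real \<Rightarrow> ('a \<Rightarrow> real) \<Rightarrow> ('a \<Rightarrow> real)" where
  "fscale c f = (\<lambda>x. c * f x)"

definition seminorm_on :: "('a \<Rightarrow> real) set \<Rightarrow> (('a \<Rightarrow> real) \<Rightarrow> real) \<Rightarrow> bool" where
  "seminorm_on V p \<longleftrightarrow>
     (\<forall>f\<in>V. \<forall>g\<in>V. p (fadd f g) \<le> p f + p g) \<and>
     (\<forall>f\<in>V. \<forall>c. p (fscale c f) = \<bar>c\<bar> * p f)"

definition delta :: "'a \<Rightarrow> ('a \<Rightarrow> real)" where
  "delta x = (\<lambda>y. if y = x then 1 else 0)"

definition graev_delta :: "'a \<Rightarrow> 'a \<Rightarrow> ('a \<Rightarrow> real)" where
  "graev_delta e x = (if x = e then (\<lambda>y. 0) else delta x)"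

definition lc_seminorm ::
  "'a topology \<Rightarrow> ('a \<Rightarrow> real) set \<Rightarrow> ('a \<Rightarrow> ('a \<Rightarrow> real)) \<Rightarrow> (('a \<Rightarrow> real) \<Rightarrow> real) \<Rightarrow> bool" where
  "lc_seminorm X V \<iota> p \<longleftrightarrow> seminorm_on V p \<and>
     (\<forall>x\<in>topspace X. continuous_map X euclideanreal (\<lambda>y. p (fdiff (\<iota> y) (\<iota> x))))"

text \<open>The finest locally convex topology on V making \<iota> continuous (the family of such
  seminorms is closed under max, so single seminorm balls form a neighbourhood base).\<close>
definition lc_topology ::
  "'a topology \<Rightarrow> ('a \<Rightarrow> real) set \<Rightarrow> ('a \<Rightarrow> ('a \<Rightarrow> real)) \<Rightarrow> ('a \<Rightarrow> real) topology" where
  "lc_topology X V \<iota> = topology (\<lambda>U. U \<subseteq> V \<and>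
     (\<forall>f\<in>U. \<exists>p \<epsilon>. lc_seminorm X V \<iota> p \<and> \<epsilon> > 0 \<and> {g\<in>V. p (fdiff g f) < \<epsilon>} \<subseteq> U))"

definition free_lcs_carrier :: "'a topology \<Rightarrow> ('a \<Rightarrow> real) set" where
  "free_lcs_carrier X = fsupp_space (topspace X)"

definition free_lcs :: "'a topology \<Rightarrow> ('a \<Rightarrow> real) topology" where
  "free_lcs X = lc_topology X (free_lcs_carrier X) delta"

definition graev_lcs_carrier :: "'a topology \<Rightarrow> 'a \<Rightarrow> ('a \<Rightarrow> real) set" where
  "graev_lcs_carrier X e = fsupp_space (topspace X - {e})"

definition graev_lcs :: "'a topology \<Rightarrow> 'a \<Rightarrow> ('a \<Rightarrow> real) topology" where
  "graev_lcs X e = lc_topology X (graev_lcs_carrier X e) (graev_delta e)"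

definition linear_on :: "('a \<Rightarrow> real) set \<Rightarrow> (('a \<Rightarrow> real) \<Rightarrow> ('b \<Rightarrow> real)) \<Rightarrow> bool" where
  "linear_on V T \<longleftrightarrow> (\<forall>f\<in>V. \<forall>g\<in>V. T (fadd f g) = fadd (T f) (T g)) \<and>
                      (\<forall>f\<in>V. \<forall>c. T (fscale c f) = fscale c (T f))"

definition lcs_isomorphic ::
  "('a \<Rightarrow> real) set \<Rightarrow> ('a \<Rightarrow> real) topology \<Rightarrow> ('b \<Rightarrow> real) set \<Rightarrow> ('b \<Rightarrow> real) topology \<Rightarrow> bool" where
  "lcs_isomorphic V1 T1 V2 T2 \<longleftrightarrow>
     (\<exists>T. linear_on V1 T \<and> bij_betw T V1 V2 \<and> homeomorphic_map T1 T2 T)"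

definition conv_seq :: "real set" where
  "conv_seq = insert 0 {1 / real n | n. n \<ge> 1}"

end

theory Submission
  imports Defs
begin

text \<open>The point 1 is isolated in \<open>s\<close>, and \<open>y \<mapsto> y/(1+y)\<close>, which sends \<open>1/n\<close> to \<open>1/(n+1)\<close>,
  is a homeomorphism of \<open>s\<close> onto \<open>s\<^sup>* = s - {1}\<close>. Relabelling generators along it identifies
  \<open>L(s)\<close> with \<open>L(s\<^sup>*)\<close>, and adjoining the isolated point 1 as base point identifies
  \<open>L(s\<^sup>*)\<close> with \<open>L\<^sub>G(s)\<close> based at 1. Finally \<open>L\<^sub>G(X)\<close> does not depend on the base
  point: the linear map sending \<open>\<delta>\<^sub>y\<close> to \<open>\<delta>\<^sub>y - \<delta>\<^sub>a\<close> moves the base point from \<open>a\<close> to \<open>e\<close>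
  and is a topological isomorphism.\<close>

lemma fdiff_eq_fadd_fscale: "fdiff g f = fadd g (fscale (-1) f)"
  by (auto simp: fdiff_def fadd_def fscale_def)

lemma finite_support_fsupp_space: "f \<in> fsupp_space A \<Longrightarrow> finite {x. f x \<noteq> 0}"
  by (simp add: fsupp_space_def)

lemma fadd_in_fsupp_space:
  assumes "f \<in> fsupp_space A" "g \<in> fsupp_space A"
  shows "fadd f g \<in> fsupp_space A"
proof -
  have "{x. fadd f g x \<noteq> 0} \<subseteq> {x. f x \<noteq> 0} \<union> {x. g x \<noteq> 0}"
    by (auto simp: fadd_def)
  with assms show ?thesis
    unfolding fsupp_space_def by (auto intro: finite_subset)
qed

lemma fscale_in_fsupp_space:
  assumes "f \<in> fsupp_space A"
  shows "fscale c f \<in> fsupp_space A"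
proof -
  have "{x. fscale c f x \<noteq> 0} \<subseteq> {x. f x \<noteq> 0}"
    by (auto simp: fscale_def)
  with assms show ?thesis
    unfolding fsupp_space_def by (auto intro: finite_subset)
qed

lemma fdiff_in_fsupp_space:
  "f \<in> fsupp_space A \<Longrightarrow> g \<in> fsupp_space A \<Longrightarrow> fdiff f g \<in> fsupp_space A"
  by (simp add: fdiff_eq_fadd_fscale fadd_in_fsupp_space fscale_in_fsupp_space)

lemma linear_on_fdiff:
  assumes "linear_on (fsupp_space A) T" "f \<in> fsupp_space A" "g \<in> fsupp_space A"
  shows "T (fdiff g f) = fdiff (T g) (T f)"
  using assms fscale_in_fsupp_space[OF assms(2)]
  by (simp add: fdiff_eq_fadd_fscale linear_on_def)

lemma seminorm_on_fdiff_self: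
  assumes "seminorm_on V p" "f \<in> V"
  shows "p (fdiff f f) = 0"
proof -
  have "fdiff f f = fscale 0 f"
    by (auto simp: fdiff_def fscale_def)
  with assms show ?thesis
    by (simp add: seminorm_on_def)
qed

lemma seminorm_on_fdiff_commute:
  assumes "seminorm_on V p" "fdiff g f \<in> V"
  shows "p (fdiff f g) = p (fdiff g f)"
proof -
  have "fdiff f g = fscale (-1) (fdiff g f)"
    by (auto simp: fdiff_def fscale_def)
  with assms show ?thesis
    by (simp add: seminorm_on_def)
qed

lemma seminorm_on_fadd_translate_le:
  assumes p: "seminorm_on (fsupp_space A) p"
    and f: "f \<in> fsupp_space A" and g: "g \<in> fsupp_space A" and w: "w \<in> fsupp_space A"
  shows "\<bar>p (fadd f w) - p (fadd g w)\<bar> \<le> p (fdiff f g)"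
proof -
  have fg: "fdiff f g \<in> fsupp_space A" "fdiff g f \<in> fsupp_space A"
    using f g by (simp_all add: fdiff_in_fsupp_space)
  have "fadd f w = fadd (fdiff f g) (fadd g w)" "fadd g w = fadd (fdiff g f) (fadd f w)"
    by (auto simp: fadd_def fdiff_def)
  then have "p (fadd f w) \<le> p (fdiff f g) + p (fadd g w)"
    "p (fadd g w) \<le> p (fdiff g f) + p (fadd f w)"
    using p fg f g w by (metis fadd_in_fsupp_space seminorm_on_def)+
  moreover have "p (fdiff g f) = p (fdiff f g)"
    using seminorm_on_fdiff_commute[OF p fg(1)] by simp
  ultimately show ?thesis
    by linarith
qed

lemma seminorm_on_compose_linear:
  assumes T: "linear_on V T" "T ` V \<subseteq> W" and p: "seminorm_on W p"
  shows "seminorm_on V (p \<circ> T)"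
  unfolding seminorm_on_def
proof (intro conjI ballI allI)
  fix f g assume "f \<in> V" "g \<in> V"
  moreover have "T f \<in> W" "T g \<in> W"
    using calculation T(2) by auto
  ultimately show "(p \<circ> T) (fadd f g) \<le> (p \<circ> T) f + (p \<circ> T) g"
    using T(1) p by (simp add: linear_on_def seminorm_on_def)
next
  fix f c assume "f \<in> V"
  moreover have "T f \<in> W"
    using calculation T(2) by auto
  ultimately show "(p \<circ> T) (fscale c f) = \<bar>c\<bar> * (p \<circ> T) f"
    using T(1) p by (simp add: linear_on_def seminorm_on_def)
qed

lemma lc_seminorm_zero: "lc_seminorm X V \<iota> (\<lambda>f. 0)"
  by (simp add: lc_seminorm_def seminorm_on_def)

lemma lc_seminorm_max:
  assumes "lc_seminorm X V \<iota> p" "lc_seminorm X V \<iota> q"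
  shows "lc_seminorm X V \<iota> (\<lambda>f. max (p f) (q f))"
proof -
  have "seminorm_on V (\<lambda>f. max (p f) (q f))"
    unfolding seminorm_on_def
  proof (intro conjI ballI allI)
    fix f g assume "f \<in> V" "g \<in> V"
    then have "p (fadd f g) \<le> p f + p g" "q (fadd f g) \<le> q f + q g"
      using assms by (auto simp: lc_seminorm_def seminorm_on_def)
    then show "max (p (fadd f g)) (q (fadd f g)) \<le> max (p f) (q f) + max (p g) (q g)"
      by linarith
  next
    fix f c assume "f \<in> V"
    then show "max (p (fscale c f)) (q (fscale c f)) = \<bar>c\<bar> * max (p f) (q f)"
      using assms by (simp add: lc_seminorm_def seminorm_on_def max_mult_distrib_left)
  qed
  with assms show ?thesis
    by (auto simp: lc_seminorm_def intro!: continuous_map_real_max)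
qed

section \<open>The finest locally convex topology\<close>

definition lc_open :: "'a topology \<Rightarrow> ('a \<Rightarrow> real) set \<Rightarrow> ('a \<Rightarrow> ('a \<Rightarrow> real)) \<Rightarrow> ('a \<Rightarrow> real) set \<Rightarrow> bool"
  where "lc_open X V \<iota> U \<longleftrightarrow> U \<subseteq> V \<and>
     (\<forall>f\<in>U. \<exists>p \<epsilon>. lc_seminorm X V \<iota> p \<and> \<epsilon> > 0 \<and> {g\<in>V. p (fdiff g f) < \<epsilon>} \<subseteq> U)"

lemma istopology_lc_open: "istopology (lc_open X V \<iota>)"
  unfolding istopology_def
proof (intro conjI allI impI)
  fix S T assume S: "lc_open X V \<iota> S" and T: "lc_open X V \<iota> T"
  have "\<exists>r \<epsilon>. lc_seminorm X V \<iota> r \<and> \<epsilon> > 0 \<and> {g\<in>V. r (fdiff g f) < \<epsilon>} \<subseteq> S \<inter> T"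
    if f: "f \<in> S \<inter> T" for f
  proof -
    obtain p \<delta> where p: "lc_seminorm X V \<iota> p" "\<delta> > 0" "{g\<in>V. p (fdiff g f) < \<delta>} \<subseteq> S"
      using S f unfolding lc_open_def by auto
    obtain q \<epsilon> where q: "lc_seminorm X V \<iota> q" "\<epsilon> > 0" "{g\<in>V. q (fdiff g f) < \<epsilon>} \<subseteq> T"
      using T f unfolding lc_open_def by auto
    have "{g\<in>V. max (p (fdiff g f)) (q (fdiff g f)) < min \<delta> \<epsilon>} \<subseteq> S \<inter> T"
      using p(3) q(3) by auto
    with lc_seminorm_max[OF p(1) q(1)] p(2) q(2) show ?thesis
      by (intro exI[of _ "\<lambda>g. max (p g) (q g)"] exI[of _ "min \<delta> \<epsilon>"]) simp
  qed
  with S show "lc_open X V \<iota> (S \<inter> T)"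
    unfolding lc_open_def by auto
next
  fix K assume K: "\<forall>S\<in>K. lc_open X V \<iota> S"
  have "\<exists>p \<epsilon>. lc_seminorm X V \<iota> p \<and> \<epsilon> > 0 \<and> {g\<in>V. p (fdiff g f) < \<epsilon>} \<subseteq> \<Union>K"
    if f: "f \<in> \<Union>K" for f
  proof -
    obtain S where S: "S \<in> K" "f \<in> S"
      using f by auto
    have "lc_open X V \<iota> S"
      using K S(1) by blast
    then obtain p \<epsilon> where "lc_seminorm X V \<iota> p" "\<epsilon> > 0" "{g\<in>V. p (fdiff g f) < \<epsilon>} \<subseteq> S"
      using S(2) unfolding lc_open_def by blast
    with S(1) show ?thesis
      by blast
  qed
  with K show "lc_open X V \<iota> (\<Union>K)"
    unfolding lc_open_def by auto
qed

lemma openin_lc_topology: "openin (lc_topology X V \<iota>) = lc_open X V \<iota>"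
proof -
  have "lc_topology X V \<iota> = topology (lc_open X V \<iota>)"
    unfolding lc_topology_def lc_open_def ..
  then show ?thesis
    by (simp add: istopology_lc_open)
qed

lemma topspace_lc_topology [simp]: "topspace (lc_topology X V \<iota>) = V"
proof
  have "lc_open X V \<iota> V"
    unfolding lc_open_def using lc_seminorm_zero
    by (intro conjI ballI exI[of _ "\<lambda>f. 0"] exI[of _ 1]) auto
  then show "V \<subseteq> topspace (lc_topology X V \<iota>)"
    by (auto simp: topspace_def openin_lc_topology)
  show "topspace (lc_topology X V \<iota>) \<subseteq> V"
    by (auto simp: topspace_def openin_lc_topology lc_open_def)
qed

lemma continuous_map_lc_topology:
  assumes T: "linear_on (fsupp_space A) T" "T ` fsupp_space A \<subseteq> W"
    and pull: "\<And>p. lc_seminorm Y W \<kappa> p \<Longrightarrow> lc_seminorm X (fsupp_space A) \<iota> (p \<circ> T)"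
  shows "continuous_map (lc_topology X (fsupp_space A) \<iota>) (lc_topology Y W \<kappa>) T"
  unfolding continuous_map_def topspace_lc_topology
proof (intro conjI allI impI)
  show "T \<in> fsupp_space A \<rightarrow> W"
    using T(2) by auto
  fix U assume "openin (lc_topology Y W \<kappa>) U"
  then have U: "\<forall>h\<in>U. \<exists>p \<epsilon>. lc_seminorm Y W \<kappa> p \<and> \<epsilon> > 0 \<and> {g\<in>W. p (fdiff g h) < \<epsilon>} \<subseteq> U"
    by (simp add: openin_lc_topology lc_open_def)
  have "\<exists>q \<epsilon>. lc_seminorm X (fsupp_space A) \<iota> q \<and> \<epsilon> > 0 \<and>
          {g\<in>fsupp_space A. q (fdiff g f) < \<epsilon>} \<subseteq> {f \<in> fsupp_space A. T f \<in> U}"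
    if f: "f \<in> fsupp_space A" "T f \<in> U" for f
  proof -
    obtain p \<epsilon> where p: "lc_seminorm Y W \<kappa> p" "\<epsilon> > 0" "{g\<in>W. p (fdiff g (T f)) < \<epsilon>} \<subseteq> U"
      using U f(2) by blast
    have "T g \<in> U" if "g \<in> fsupp_space A" "p (T (fdiff g f)) < \<epsilon>" for g
      using that p(3) T(2) linear_on_fdiff[OF T(1) f(1) that(1)] by auto
    then show ?thesis
      using pull[OF p(1)] p(2) by (intro exI[of _ "p \<circ> T"] exI[of _ \<epsilon>]) auto
  qed
  then show "openin (lc_topology X (fsupp_space A) \<iota>) {f \<in> fsupp_space A. T f \<in> U}"
    unfolding openin_lc_topology lc_open_def by blast
qed

lemma lc_seminorm_compose_linear:
  assumes T: "linear_on (fsupp_space A) T" "T ` fsupp_space A \<subseteq> W"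
    and p: "lc_seminorm Y W \<kappa> p"
    and cont: "\<And>x. x \<in> topspace X \<Longrightarrow>
                 continuous_map X euclideanreal (\<lambda>y. p (T (fdiff (\<iota> y) (\<iota> x))))"
  shows "lc_seminorm X (fsupp_space A) \<iota> (p \<circ> T)"
  using seminorm_on_compose_linear[OF T] p cont by (simp add: lc_seminorm_def)

lemma lcs_isomorphic_lc_topology:
  assumes T: "linear_on (fsupp_space A) T" "T ` fsupp_space A \<subseteq> fsupp_space B"
    and S: "linear_on (fsupp_space B) S" "S ` fsupp_space B \<subseteq> fsupp_space A"
    and ST: "\<And>f. f \<in> fsupp_space A \<Longrightarrow> S (T f) = f"
    and TS: "\<And>g. g \<in> fsupp_space B \<Longrightarrow> T (S g) = g"
    and cont_T: "\<And>p x. lc_seminorm Y (fsupp_space B) \<kappa> p \<Longrightarrow> x \<in> topspace X \<Longrightarrow>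
                   continuous_map X euclideanreal (\<lambda>y. p (T (fdiff (\<iota> y) (\<iota> x))))"
    and cont_S: "\<And>q x. lc_seminorm X (fsupp_space A) \<iota> q \<Longrightarrow> x \<in> topspace Y \<Longrightarrow>
                   continuous_map Y euclideanreal (\<lambda>y. q (S (fdiff (\<kappa> y) (\<kappa> x))))"
  shows "lcs_isomorphic (fsupp_space A) (lc_topology X (fsupp_space A) \<iota>)
                        (fsupp_space B) (lc_topology Y (fsupp_space B) \<kappa>)"
proof -
  have "continuous_map (lc_topology X (fsupp_space A) \<iota>) (lc_topology Y (fsupp_space B) \<kappa>) T"
    using T cont_T by (intro continuous_map_lc_topology lc_seminorm_compose_linear)
  moreover have "continuous_map (lc_topology Y (fsupp_space B) \<kappa>) (lc_topology X (fsupp_space A) \<iota>) S"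
    using S cont_S by (intro continuous_map_lc_topology lc_seminorm_compose_linear)
  ultimately have "homeomorphic_maps (lc_topology X (fsupp_space A) \<iota>) (lc_topology Y (fsupp_space B) \<kappa>) T S"
    unfolding homeomorphic_maps_def using ST TS by simp
  moreover have "bij_betw T (fsupp_space A) (fsupp_space B)"
    using bij_betw_byWitness[OF _ _ T(2) S(2)] ST TS by blast
  ultimately show ?thesis
    using T(1) homeomorphic_map_maps unfolding lcs_isomorphic_def by blast
qed

lemma lcs_isomorphic_trans:
  assumes "lcs_isomorphic V1 T1 V2 T2" "lcs_isomorphic V2 T2 V3 T3"
  shows "lcs_isomorphic V1 T1 V3 T3"
proof -
  obtain F where F: "linear_on V1 F" "bij_betw F V1 V2" "homeomorphic_map T1 T2 F"
    using assms(1) unfolding lcs_isomorphic_def by blast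
  obtain G where G: "linear_on V2 G" "bij_betw G V2 V3" "homeomorphic_map T2 T3 G"
    using assms(2) unfolding lcs_isomorphic_def by blast
  have "F f \<in> V2" if "f \<in> V1" for f
    using F(2) that bij_betwE by blast
  with F(1) G(1) have "linear_on V1 (G \<circ> F)"
    by (simp add: linear_on_def)
  with F G show ?thesis
    unfolding lcs_isomorphic_def by (meson bij_betw_trans homeomorphic_map_compose)
qed

(* lc_seminorm only asks for continuity of p (\<iota> y - \<iota> x); continuity of every translate
   follows from the reverse triangle inequality. *)
lemma continuous_map_lc_seminorm_translate:
  assumes p: "lc_seminorm X (fsupp_space A) \<iota> p"
    and \<iota>: "\<And>y. y \<in> topspace X \<Longrightarrow> \<iota> y \<in> fsupp_space A"
    and w: "w \<in> fsupp_space A"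
  shows "continuous_map X euclideanreal (\<lambda>y. p (fadd (\<iota> y) w))"
  unfolding continuous_map_atin limitin_canonical_iff
proof
  fix y0 assume y0: "y0 \<in> topspace X"
  have sn: "seminorm_on (fsupp_space A) p"
    using p by (simp add: lc_seminorm_def)
  have "((\<lambda>y. p (fdiff (\<iota> y) (\<iota> y0))) \<longlongrightarrow> p (fdiff (\<iota> y0) (\<iota> y0))) (atin X y0)"
    using p y0 by (simp add: lc_seminorm_def continuous_map_atin)
  then have "((\<lambda>y. p (fdiff (\<iota> y) (\<iota> y0))) \<longlongrightarrow> 0) (atin X y0)"
    using seminorm_on_fdiff_self[OF sn \<iota>[OF y0]] by simp
  moreover have "eventually (\<lambda>y. norm (p (fadd (\<iota> y) w) - p (fadd (\<iota> y0) w)) \<le> p (fdiff (\<iota> y) (\<iota> y0)))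
                   (atin X y0)"
    unfolding eventually_atin
    using seminorm_on_fadd_translate_le[OF sn \<iota> \<iota>[OF y0] w] by auto
  ultimately have "((\<lambda>y. p (fadd (\<iota> y) w) - p (fadd (\<iota> y0) w)) \<longlongrightarrow> 0) (atin X y0)"
    by (rule Lim_null_comparison[rotated])
  then show "((\<lambda>y. p (fadd (\<iota> y) w)) \<longlongrightarrow> p (fadd (\<iota> y0) w)) (atin X y0)"
    by (rule LIM_zero_cancel)
qed

section \<open>Changing the base point of a Graev space\<close>

definition coeff_sum :: "('a \<Rightarrow> real) \<Rightarrow> real" where
  "coeff_sum f = sum f {x. f x \<noteq> 0}"

lemma coeff_sum_eq_sum:
  "finite F \<Longrightarrow> {x. f x \<noteq> 0} \<subseteq> F \<Longrightarrow> coeff_sum f = sum f F"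
  unfolding coeff_sum_def by (rule sum.mono_neutral_left) auto

lemma coeff_sum_fadd:
  assumes "finite {x. f x \<noteq> 0}" "finite {x. g x \<noteq> 0}"
  shows "coeff_sum (fadd f g) = coeff_sum f + coeff_sum g"
proof -
  let ?F = "{x. f x \<noteq> 0} \<union> {x. g x \<noteq> 0}"
  have F: "finite ?F"
    using assms by simp
  have "coeff_sum (fadd f g) = sum (fadd f g) ?F"
    by (rule coeff_sum_eq_sum[OF F]) (auto simp: fadd_def)
  also have "\<dots> = sum f ?F + sum g ?F"
    by (simp add: fadd_def sum.distrib)
  also have "\<dots> = coeff_sum f + coeff_sum g"
    using coeff_sum_eq_sum[OF F, of f] coeff_sum_eq_sum[OF F, of g] by auto
  finally show ?thesis .
qed

lemma coeff_sum_fscale: "coeff_sum (fscale c f) = c * coeff_sum f"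
proof (cases "c = 0")
  case False
  then show ?thesis
    by (simp add: coeff_sum_def fscale_def sum_distrib_left)
qed (simp add: coeff_sum_def fscale_def)

lemma coeff_sum_delta [simp]: "coeff_sum (delta y) = 1"
  by (simp add: coeff_sum_def delta_def)

(* Drops the coefficient at e and puts minus the total coefficient sum at a, so that
   graev_delta a y goes to graev_delta e y - graev_delta e a. *)
definition rebase :: "'a \<Rightarrow> 'a \<Rightarrow> ('a \<Rightarrow> real) \<Rightarrow> ('a \<Rightarrow> real)" where
  "rebase a e f = (\<lambda>z. if z = e then 0 else if z = a then - coeff_sum f else f z)"

lemma rebase_graev_delta:
  "rebase a e (graev_delta a y) = fdiff (graev_delta e y) (graev_delta e a)"
  by (rule ext) (simp add: rebase_def graev_delta_def fdiff_def coeff_sum_def delta_def)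

lemma linear_on_rebase: "linear_on (fsupp_space A) (rebase a e)"
  unfolding linear_on_def
proof (intro conjI ballI allI)
  fix f g assume "f \<in> fsupp_space A" "g \<in> fsupp_space A"
  then have "coeff_sum (\<lambda>x. f x + g x) = coeff_sum f + coeff_sum g"
    using coeff_sum_fadd[unfolded fadd_def] finite_support_fsupp_space by blast
  then show "rebase a e (fadd f g) = fadd (rebase a e f) (rebase a e g)"
    by (auto simp: rebase_def fadd_def)
next
  fix f c
  show "rebase a e (fscale c f) = fscale c (rebase a e f)"
    by (auto simp: rebase_def fscale_def coeff_sum_fscale[unfolded fscale_def])
qed

lemma rebase_in_fsupp_space:
  assumes "a \<in> A" "f \<in> fsupp_space (A - {a})"
  shows "rebase a e f \<in> fsupp_space (A - {e})"
proof -
  have "{x. rebase a e f x \<noteq> 0} \<subseteq> insert a {x. f x \<noteq> 0}"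
    by (auto simp: rebase_def)
  then have "finite {x. rebase a e f x \<noteq> 0}"
    using finite_support_fsupp_space[OF assms(2)] by (auto intro: finite_subset)
  with assms show ?thesis
    by (auto simp: fsupp_space_def rebase_def split: if_splits)
qed

lemma coeff_sum_rebase:
  assumes "a \<noteq> e" "f a = 0" "finite {x. f x \<noteq> 0}"
  shows "coeff_sum (rebase a e f) = - f e"
proof -
  let ?d = "fadd (fscale (- f e) (delta e)) (fscale (- coeff_sum f) (delta a))"
  have scaled_delta: "finite {x. fscale c (delta y) x \<noteq> 0}" for c and y :: 'a
    by (rule finite_subset[of _ "{y}"]) (auto simp: fscale_def delta_def)
  have "rebase a e f = fadd f ?d"
    using assms(1,2) by (auto simp: rebase_def fadd_def fscale_def delta_def)
  moreover have "finite {x. ?d x \<noteq> 0}"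
    by (rule finite_subset[of _ "{a, e}"]) (auto simp: fadd_def fscale_def delta_def)
  ultimately have "coeff_sum (rebase a e f) = coeff_sum f + coeff_sum ?d"
    using assms(3) by (simp add: coeff_sum_fadd)
  also have "coeff_sum ?d = - f e - coeff_sum f"
    using scaled_delta by (simp add: coeff_sum_fadd coeff_sum_fscale)
  finally show ?thesis
    by simp
qed

lemma rebase_rebase:
  assumes "f a = 0" "finite {x. f x \<noteq> 0}"
  shows "rebase e a (rebase a e f) = f"
proof (cases "a = e")
  case False
  then have "coeff_sum (rebase a e f) = - f e"
    using assms by (intro coeff_sum_rebase)
  with False assms show ?thesis
    by (intro ext) (simp add: rebase_def)
qed (use assms in \<open>auto simp: rebase_def\<close>)

lemma graev_delta_in_fsupp_space: "y \<in> A \<Longrightarrow> graev_delta e y \<in> fsupp_space (A - {e})"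
  unfolding fsupp_space_def
  by (auto intro: finite_subset[of _ "{y}"] simp: graev_delta_def delta_def)

lemma rebase_fdiff_graev_delta:
  assumes "x \<in> A" "y \<in> A"
  shows "rebase a e (fdiff (graev_delta a y) (graev_delta a x)) = fdiff (graev_delta e y) (graev_delta e x)"
proof -
  have "rebase a e (fdiff (graev_delta a y) (graev_delta a x)) =
          fdiff (rebase a e (graev_delta a y)) (rebase a e (graev_delta a x))"
    using assms by (intro linear_on_fdiff[OF linear_on_rebase, where A = "A - {a}"] graev_delta_in_fsupp_space)
  then show ?thesis
    by (simp add: rebase_graev_delta fdiff_def)
qed

lemma graev_lcs_isomorphic_change_base:
  assumes a: "a \<in> topspace X" and e: "e \<in> topspace X"
  shows "lcs_isomorphic (graev_lcs_carrier X a) (graev_lcs X a) (graev_lcs_carrier X e) (graev_lcs X e)"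
  unfolding graev_lcs_def graev_lcs_carrier_def
proof (rule lcs_isomorphic_lc_topology[OF linear_on_rebase _ linear_on_rebase])
  show "rebase a e ` fsupp_space (topspace X - {a}) \<subseteq> fsupp_space (topspace X - {e})"
    using rebase_in_fsupp_space[OF a] by blast
  show "rebase e a ` fsupp_space (topspace X - {e}) \<subseteq> fsupp_space (topspace X - {a})"
    using rebase_in_fsupp_space[OF e] by blast
  show "rebase e a (rebase a e f) = f" if "f \<in> fsupp_space (topspace X - {a})" for f
    using that by (intro rebase_rebase) (auto simp: fsupp_space_def)
  show "rebase a e (rebase e a f) = f" if "f \<in> fsupp_space (topspace X - {e})" for f
    using that by (intro rebase_rebase) (auto simp: fsupp_space_def)
next
  fix p x assume p: "lc_seminorm X (fsupp_space (topspace X - {e})) (graev_delta e) p"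
    and x: "x \<in> topspace X"
  then have "continuous_map X euclideanreal (\<lambda>y. p (fdiff (graev_delta e y) (graev_delta e x)))"
    by (simp add: lc_seminorm_def)
  then show "continuous_map X euclideanreal (\<lambda>y. p (rebase a e (fdiff (graev_delta a y) (graev_delta a x))))"
    by (rule continuous_map_eq) (simp add: rebase_fdiff_graev_delta[OF x])
next
  fix p x assume p: "lc_seminorm X (fsupp_space (topspace X - {a})) (graev_delta a) p"
    and x: "x \<in> topspace X"
  then have "continuous_map X euclideanreal (\<lambda>y. p (fdiff (graev_delta a y) (graev_delta a x)))"
    by (simp add: lc_seminorm_def)
  then show "continuous_map X euclideanreal (\<lambda>y. p (rebase e a (fdiff (graev_delta e y) (graev_delta e x))))"
    by (rule continuous_map_eq) (simp add: rebase_fdiff_graev_delta[OF x])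
qed

section \<open>Adjoining an isolated base point\<close>

lemma delta_in_fsupp_space: "y \<in> A \<Longrightarrow> delta y \<in> fsupp_space A"
  unfolding fsupp_space_def
  by (auto intro: finite_subset[of _ "{y}"] simp: delta_def)

definition relabel :: "'a set \<Rightarrow> ('a \<Rightarrow> 'b) \<Rightarrow> ('b \<Rightarrow> real) \<Rightarrow> ('a \<Rightarrow> real)" where
  "relabel A k f = (\<lambda>z. if z \<in> A then f (k z) else 0)"

lemma linear_on_relabel: "linear_on V (relabel A k)"
  by (auto simp: linear_on_def relabel_def fadd_def fscale_def)

lemma relabel_in_fsupp_space:
  assumes f: "f \<in> fsupp_space B" and hk: "\<And>z. z \<in> A \<Longrightarrow> h (k z) = z"
  shows "relabel A k f \<in> fsupp_space A"
proof -
  have "z \<in> h ` {x. f x \<noteq> 0}" if "z \<in> A" "f (k z) \<noteq> 0" for z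
    using that by (intro image_eqI[of z h "k z"]) (simp_all add: hk)
  then have "{z. relabel A k f z \<noteq> 0} \<subseteq> h ` {x. f x \<noteq> 0}"
    by (auto simp: relabel_def split: if_splits)
  then have "finite {z. relabel A k f z \<noteq> 0}"
    using finite_support_fsupp_space[OF f] by (rule finite_subset[OF _ finite_imageI])
  moreover have "{z. relabel A k f z \<noteq> 0} \<subseteq> A"
    by (auto simp: relabel_def split: if_splits)
  ultimately show ?thesis
    by (simp add: fsupp_space_def)
qed

lemma relabel_relabel:
  assumes f: "f \<in> fsupp_space A" and hk: "\<And>z. z \<in> A \<Longrightarrow> h z \<in> B \<and> k (h z) = z"
  shows "relabel A h (relabel B k f) = f"
proof (rule ext)
  fix z
  show "relabel A h (relabel B k f) z = f z"
  proof (cases "z \<in> A")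
    case True
    with hk show ?thesis
      by (simp add: relabel_def)
  next
    case False
    with f show ?thesis
      by (auto simp: relabel_def fsupp_space_def)
  qed
qed

lemma relabel_delta:
  assumes "h y \<in> A" "k (h y) = y" "\<And>z. z \<in> A \<Longrightarrow> h (k z) = z"
  shows "relabel A k (delta y) = delta (h y)"
proof (rule ext)
  fix z
  have "z \<in> A \<and> k z = y \<longleftrightarrow> z = h y"
    using assms by metis
  then show "relabel A k (delta y) z = delta (h y) z"
    by (auto simp: relabel_def delta_def)
qed

lemma continuous_map_clopen_point:
  assumes e: "openin X {e}" "closedin X {e}"
    and f: "continuous_map (subtopology X (topspace X - {e})) Y f" and fe: "f e \<in> topspace Y"
  shows "continuous_map X Y f"
proof (rule pasting_lemma[where I = "{topspace X - {e}, {e}}" and T = id and f = "\<lambda>_. f"])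
  have "continuous_map (subtopology X {e}) Y (\<lambda>_. f e)"
    using fe by simp
  then have "continuous_map (subtopology X {e}) Y f"
    by (rule continuous_map_eq) (use e(1) openin_subset in auto)
  with f show "continuous_map (subtopology X (id U)) Y f" if "U \<in> {topspace X - {e}, {e}}" for U
    using that by auto
  show "openin X (id U)" if "U \<in> {topspace X - {e}, {e}}" for U
    using that e by (auto simp: closedin_def)
qed auto

lemma homeomorphic_maps_onto_subtopologyD:
  assumes hk: "homeomorphic_maps X (subtopology X S) h k" and S: "S \<subseteq> topspace X"
  shows "continuous_map X X h" "continuous_map (subtopology X S) X k"
    and "\<And>y. y \<in> topspace X \<Longrightarrow> h y \<in> S \<and> k (h y) = y"
    and "\<And>z. z \<in> S \<Longrightarrow> k z \<in> topspace X \<and> h (k z) = z"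
proof -
  have h: "continuous_map X (subtopology X S) h" and k: "continuous_map (subtopology X S) X k"
    and kh: "\<And>y. y \<in> topspace X \<Longrightarrow> k (h y) = y" and hk': "\<And>z. z \<in> S \<Longrightarrow> h (k z) = z"
    using hk S by (simp_all add: homeomorphic_maps_def Int_absorb1)
  show "continuous_map X X h"
    using h by (rule continuous_map_into_fulltopology)
  show "continuous_map (subtopology X S) X k"
    by (rule k)
  show "h y \<in> S \<and> k (h y) = y" if "y \<in> topspace X" for y
    using continuous_map_image_subset_topspace[OF h] kh that S by auto
  show "k z \<in> topspace X \<and> h (k z) = z" if "z \<in> S" for z
    using continuous_map_image_subset_topspace[OF k] hk' that S by auto
qed

lemma continuous_map_relabel_free_to_graev:
  assumes hk: "homeomorphic_maps X (subtopology X (topspace X - {e})) h k"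
    and p: "lc_seminorm X (fsupp_space (topspace X - {e})) (graev_delta e) p" and x: "x \<in> topspace X"
  shows "continuous_map X euclideanreal (\<lambda>y. p (relabel (topspace X - {e}) k (fdiff (delta y) (delta x))))"
proof -
  let ?T = "relabel (topspace X - {e}) k"
  note hk = homeomorphic_maps_onto_subtopologyD[OF hk Diff_subset]
  have T_delta: "?T (delta y) = graev_delta e (h y)" if "y \<in> topspace X" for y
    using relabel_delta[of h y "topspace X - {e}" k] hk(3,4) that by (auto simp: graev_delta_def)
  have T_diff: "?T (fdiff (delta y) (delta x)) = fdiff (graev_delta e (h y)) (graev_delta e (h x))"
    if "y \<in> topspace X" for y
  proof -
    have "?T (fdiff (delta y) (delta x)) = fdiff (?T (delta y)) (?T (delta x))"
      using that x by (intro linear_on_fdiff[OF linear_on_relabel, where A = "topspace X"] delta_in_fsupp_space)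
    with T_delta that x show ?thesis
      by simp
  qed
  have "continuous_map X euclideanreal (\<lambda>u. p (fdiff (graev_delta e u) (graev_delta e (h x))))"
    using p hk(3)[OF x] by (simp add: lc_seminorm_def)
  then have "continuous_map X euclideanreal (\<lambda>y. p (fdiff (graev_delta e (h y)) (graev_delta e (h x))))"
    using continuous_map_compose[OF hk(1)] by (simp add: o_def)
  then show ?thesis
    by (rule continuous_map_eq) (simp add: T_diff)
qed

lemma continuous_map_relabel_graev_to_free:
  assumes e: "openin X {e}" "closedin X {e}"
    and hk: "homeomorphic_maps X (subtopology X (topspace X - {e})) h k"
    and q: "lc_seminorm X (fsupp_space (topspace X)) delta q" and x: "x \<in> topspace X"
  shows "continuous_map X euclideanreal
           (\<lambda>y. q (relabel (topspace X) h (fdiff (graev_delta e y) (graev_delta e x))))"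
proof -
  let ?X' = "topspace X - {e}" and ?S = "relabel (topspace X) h"
  note hk = homeomorphic_maps_onto_subtopologyD[OF hk Diff_subset]
  define w where "w = fscale (-1) (?S (graev_delta e x))"
  have w: "w \<in> fsupp_space (topspace X)"
    unfolding w_def using hk(3)
    by (intro fscale_in_fsupp_space relabel_in_fsupp_space[OF graev_delta_in_fsupp_space[OF x], where h = k])
      blast
  have S_diff: "?S (fdiff (graev_delta e y) (graev_delta e x)) = fadd (?S (graev_delta e y)) w"
    if "y \<in> topspace X" for y
  proof -
    have "?S (fdiff (graev_delta e y) (graev_delta e x)) = fdiff (?S (graev_delta e y)) (?S (graev_delta e x))"
      using that x by (intro linear_on_fdiff[OF linear_on_relabel, where A = ?X'] graev_delta_in_fsupp_space)
    then show ?thesis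
      by (simp add: w_def fdiff_def fadd_def fscale_def)
  qed
  have S_delta: "?S (graev_delta e y) = delta (k y)" if y: "y \<in> ?X'" for y
  proof -
    have "?S (delta y) = delta (k y)"
      using hk(3,4) y by (intro relabel_delta) blast+
    with y show ?thesis
      by (simp add: graev_delta_def)
  qed
  have "continuous_map X euclideanreal (\<lambda>u. q (fadd (delta u) w))"
    using q delta_in_fsupp_space w by (rule continuous_map_lc_seminorm_translate)
  then have "continuous_map (subtopology X ?X') euclideanreal (\<lambda>y. q (fadd (delta (k y)) w))"
    using continuous_map_compose[OF hk(2)] by (simp add: o_def)
  then have "continuous_map (subtopology X ?X') euclideanreal
               (\<lambda>y. q (?S (fdiff (graev_delta e y) (graev_delta e x))))"
    by (rule continuous_map_eq) (simp add: S_diff S_delta)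
  then show ?thesis
    by (rule continuous_map_clopen_point[OF e]) simp
qed

lemma free_lcs_isomorphic_graev_lcs:
  assumes e: "openin X {e}" "closedin X {e}"
    and hk: "homeomorphic_maps X (subtopology X (topspace X - {e})) h k"
  shows "lcs_isomorphic (free_lcs_carrier X) (free_lcs X) (graev_lcs_carrier X e) (graev_lcs X e)"
  unfolding free_lcs_def free_lcs_carrier_def graev_lcs_def graev_lcs_carrier_def
proof (rule lcs_isomorphic_lc_topology[OF linear_on_relabel _ linear_on_relabel])
  note hk' = homeomorphic_maps_onto_subtopologyD[OF hk Diff_subset]
  show "relabel (topspace X - {e}) k ` fsupp_space (topspace X) \<subseteq> fsupp_space (topspace X - {e})"
    using hk'(4) by (intro image_subsetI relabel_in_fsupp_space[where h = h]) blast+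
  show "relabel (topspace X) h ` fsupp_space (topspace X - {e}) \<subseteq> fsupp_space (topspace X)"
    using hk'(3) by (intro image_subsetI relabel_in_fsupp_space[where h = k]) blast+
  show "relabel (topspace X) h (relabel (topspace X - {e}) k f) = f" if "f \<in> fsupp_space (topspace X)" for f
    using that hk'(3) by (rule relabel_relabel)
  show "relabel (topspace X - {e}) k (relabel (topspace X) h g) = g" if "g \<in> fsupp_space (topspace X - {e})" for g
    using that hk'(4) by (rule relabel_relabel)
next
  fix p x assume "lc_seminorm X (fsupp_space (topspace X - {e})) (graev_delta e) p" "x \<in> topspace X"
  then show "continuous_map X euclideanreal (\<lambda>y. p (relabel (topspace X - {e}) k (fdiff (delta y) (delta x))))"
    by (rule continuous_map_relabel_free_to_graev[OF hk])
next
  fix q x assume "lc_seminorm X (fsupp_space (topspace X)) delta q" "x \<in> topspace X"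
  then show "continuous_map X euclideanreal
               (\<lambda>y. q (relabel (topspace X) h (fdiff (graev_delta e y) (graev_delta e x))))"
    by (rule continuous_map_relabel_graev_to_free[OF e hk])
qed

section \<open>The convergent sequence\<close>

lemma conv_seq_cases:
  assumes "x \<in> conv_seq"
  obtains "x = 0" | n :: nat where "n \<ge> 1" "x = 1 / real n"
  using assms by (auto simp: conv_seq_def)

lemma inverse_nat_in_conv_seq: "n \<ge> 1 \<Longrightarrow> 1 / real n \<in> conv_seq"
  by (auto simp: conv_seq_def)

lemma zero_in_conv_seq: "0 \<in> conv_seq" and one_in_conv_seq: "1 \<in> conv_seq"
  using inverse_nat_in_conv_seq[of 1] by (auto simp: conv_seq_def)

lemma conv_seq_nonneg: "x \<in> conv_seq \<Longrightarrow> x \<ge> 0"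
  by (auto elim: conv_seq_cases)

lemma conv_seq_le_half:
  assumes "x \<in> conv_seq" "x \<noteq> 1"
  shows "x \<le> 1 / 2"
  using assms(1)
proof (cases rule: conv_seq_cases)
  case (2 n)
  with assms(2) have "real n \<ge> 2"
    by (cases n) auto
  with 2 show ?thesis
    by (simp add: divide_le_eq)
qed simp

definition seq_shift :: "real \<Rightarrow> real" where
  "seq_shift y = y / (1 + y)"

definition seq_unshift :: "real \<Rightarrow> real" where
  "seq_unshift z = z / (1 - z)"

lemma seq_unshift_shift: "y \<ge> 0 \<Longrightarrow> seq_unshift (seq_shift y) = y"
  by (simp add: seq_shift_def seq_unshift_def field_simps)

lemma seq_shift_unshift: "z \<noteq> 1 \<Longrightarrow> seq_shift (seq_unshift z) = z"
  by (simp add: seq_shift_def seq_unshift_def field_simps)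

lemma seq_shift_in_conv_seq:
  assumes "y \<in> conv_seq"
  shows "seq_shift y \<in> conv_seq" "seq_shift y \<noteq> 1"
proof -
  from assms have "seq_shift y \<in> conv_seq \<and> seq_shift y \<noteq> 1"
  proof (cases rule: conv_seq_cases)
    case (2 n)
    then have "real n > 0"
      by simp
    then have "seq_shift y = 1 / real (Suc n)"
      unfolding 2(2) seq_shift_def by (simp add: field_simps)
    with 2(1) inverse_nat_in_conv_seq[of "Suc n"] show ?thesis
      by auto
  qed (simp add: seq_shift_def zero_in_conv_seq)
  then show "seq_shift y \<in> conv_seq" "seq_shift y \<noteq> 1"
    by simp_all
qed

lemma seq_unshift_in_conv_seq:
  assumes "z \<in> conv_seq" "z \<noteq> 1"
  shows "seq_unshift z \<in> conv_seq"
  using assms(1)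
proof (cases rule: conv_seq_cases)
  case (2 n)
  with assms(2) obtain m where m: "n = Suc m" "m \<ge> 1"
    by (cases n) auto
  then have "real m > 0"
    by simp
  then have "seq_unshift z = 1 / real m"
    unfolding 2(2) seq_unshift_def m(1) by (simp add: field_simps)
  with m show ?thesis
    by (simp add: inverse_nat_in_conv_seq)
qed (simp add: seq_unshift_def zero_in_conv_seq)

lemma homeomorphic_maps_seq_shift:
  "homeomorphic_maps (top_of_set conv_seq) (subtopology (top_of_set conv_seq) (conv_seq - {1}))
     seq_shift seq_unshift"
proof -
  have "continuous_on conv_seq seq_shift"
    unfolding seq_shift_def by (intro continuous_intros) (auto dest: conv_seq_nonneg)
  moreover have "continuous_on (conv_seq - {1}) seq_unshift"
    unfolding seq_unshift_def by (intro continuous_intros) auto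
  ultimately show ?thesis
    unfolding homeomorphic_maps_def subtopology_subtopology
    by (auto simp: Int_absorb1 seq_shift_in_conv_seq seq_unshift_in_conv_seq seq_shift_unshift
        seq_unshift_shift conv_seq_nonneg)
qed

lemma openin_one_conv_seq: "openin (top_of_set conv_seq) {1}"
proof -
  have "{1} = conv_seq \<inter> {1/2<..}"
    using one_in_conv_seq conv_seq_le_half by force
  then show ?thesis
    by (metis open_greaterThan openin_open_Int)
qed

lemma closedin_one_conv_seq: "closedin (top_of_set conv_seq) {1}"
  using one_in_conv_seq by (simp add: closedin_closed_Int[of "{1}", simplified])

theorem mainTheorem2:
  assumes "e \<in> conv_seq"
  shows "lcs_isomorphic
           (free_lcs_carrier (subtopology euclideanreal conv_seq))
           (free_lcs (subtopology euclideanreal conv_seq))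
           (graev_lcs_carrier (subtopology euclideanreal conv_seq) e)
           (graev_lcs (subtopology euclideanreal conv_seq) e)"
proof (rule lcs_isomorphic_trans)
  show "lcs_isomorphic (free_lcs_carrier (top_of_set conv_seq)) (free_lcs (top_of_set conv_seq))
          (graev_lcs_carrier (top_of_set conv_seq) 1) (graev_lcs (top_of_set conv_seq) 1)"
    using openin_one_conv_seq closedin_one_conv_seq homeomorphic_maps_seq_shift
    by (intro free_lcs_isomorphic_graev_lcs) simp_all
  show "lcs_isomorphic (graev_lcs_carrier (top_of_set conv_seq) 1) (graev_lcs (top_of_set conv_seq) 1)
          (graev_lcs_carrier (top_of_set conv_seq) e) (graev_lcs (top_of_set conv_seq) e)"
    using assms one_in_conv_seq by (intro graev_lcs_isomorphic_change_base) simp_all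
qed

end
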